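(* Let $n\ge2$, $0<k<n$, $l=n-k$. Let $Y_1=[0,1]$, and let each of $Y_2,\dots,Y_k,Z_1,\dots,Z_l$ be either $[0,1]$ or $[-5,5]$; set $Y=Y_1\times\cdots\times Y_k$, $Z=Z_1\times\cdots\times Z_l$, $X=Y\times Z\subseteq\mathbb{R}^n$. Let $f:Y_1\to\mathbb{R}$, $g:Z\to\mathbb{R}$, $h:\mathbb{R}^2\to\mathbb{R}$ be arbitrary functions, and consider the 2-objective problem on $X$ with objectives $f_1(y,z)=f(y_1)$ and $f_2(y,z)=g(z)\,h(f(y_1),g(z))$. Then this problem is not simple. (In particular the ZDT benchmark problems ZDT1–4 and ZDT6, which are of this form, are non-simple for every choice of $n$ and $k$.)
   Context: A problem is a finite set $\mathbf{f}=\{f_1,\dots,f_m\}$ of functions $f_i:\mathbb{R}^n\to\mathbb{R}$ together with a feasible region $X\subseteq\mathbb{R}^n$, to be minimized simultaneously. A subproblem $\mathbf{g}\subseteq\mathbf{f}$ is a subset of these functions (including $\emptyset$ and $\mathbf{f}$), with the same $X$; its evaluation map is $x\mapsto(f_i(x))_{f_i\in\mathbf{g}}\in\mathbb{R}^{|\mathbf{g}|}$. The Pareto set $X^*(\mathbf{g})$ is the set of $x^*\in X$ for which there is no $x\in X$ with $f_i(x)\le f_i(x^* )$ for all $f_i\in\mathbf{g}$ and $f_j(x)<f_j(x^* )$ for some $f_j\in\mathbf{g}$; by convention $X^*(\emptyset)=\emptyset$. A problem $\mathbf{f}$ is simple if every subproblem $\mathbf{g}\subseteq\mathbf{f}$ with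 $k=|\mathbf{g}|$ objectives satisfies: (S1) $X^*(\mathbf{g})$ is homeomorphic to $\Delta^{k-1}=\{t\in[0,1]^k:\sum t_i=1\}$ (with $\Delta^{-1}=\emptyset$); (S2) the evaluation map of $\mathbf{g}$ restricted to $X^*(\mathbf{g})$ is a topological embedding into $\mathbb{R}^k$. All sets carry the subspace topology from Euclidean space. *)

theory Defs
  imports "HOL-Analysis.Analysis"
begin

definition pareto_set :: "('a \<Rightarrow> real) set \<Rightarrow> 'a set \<Rightarrow> 'a set" where
  "pareto_set G X =
     (if G = {} then {}
      else {xs \<in> X. \<not> (\<exists>x\<in>X. (\<forall>fi\<in>G. fi x \<le> fi xs) \<and> (\<exists>fj\<in>G. fj x < fj xs))})"

text \<open>R^G is modelled as functions G-objective => real that vanish outside G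
  (product topology, which on this finite-dimensional subspace is Euclidean).\<close>
definition eval_map :: "('a \<Rightarrow> real) set \<Rightarrow> 'a \<Rightarrow> (('a \<Rightarrow> real) \<Rightarrow> real)" where
  "eval_map G x = (\<lambda>fi. if fi \<in> G then fi x else 0)"

text \<open>Standard simplex Delta^{|G|-1} in R^G (empty when G is empty).\<close>
definition std_simplex :: "('a \<Rightarrow> real) set \<Rightarrow> (('a \<Rightarrow> real) \<Rightarrow> real) set" where
  "std_simplex G = {t. (\<forall>fi. fi \<notin> G \<longrightarrow> t fi = 0) \<and> (\<forall>fi\<in>G. 0 \<le> t fi) \<and> sum t G = 1}"

definition simple_problem :: "('a::topological_space \<Rightarrow> real) set \<Rightarrow> 'a set \<Rightarrow> bool" where
  "simple_problem F X =
     (\<forall>G. G \<subseteq> F \<longrightarrow>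
        (pareto_set G X homeomorphic std_simplex G) \<and>
        (\<exists>e'. homeomorphism (pareto_set G X) (eval_map G ` pareto_set G X) (eval_map G) e'))"

end

theory Submission
  imports Defs
begin

text \<open>If the problem were simple, its one-objective subproblem \<open>{f\<^sub>1}\<close> would have a
  Pareto set homeomorphic to \<open>\<Delta>\<^sup>0\<close>, a point; so \<open>f\<^sub>1\<close> would have a unique minimiser on \<open>X\<close>.
  But \<open>f\<^sub>1\<close> only depends on \<open>y\<^sub>1\<close>, and moving a minimiser along any coordinate of \<open>Z\<close>
  (which is nonempty since \<open>l > 0\<close>) yields a second one.\<close>

lemma homeomorphic_singletonE:
  assumes "S homeomorphic {a}"
  obtains b where "S = {b}"
  using assms unfolding homeomorphic_def homeomorphism_def by (metis image_empty image_insert)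

lemma std_simplex_singleton: "std_simplex {f} = {\<lambda>g. if g = f then 1 else 0}"
  unfolding std_simplex_def by (auto split: if_splits)

lemma pareto_set_single_objective:
  "pareto_set {f} X = {x \<in> X. \<forall>y\<in>X. f x \<le> f y}"
  unfolding pareto_set_def by (auto simp: not_less)

lemma simple_problem_unique_minimiser:
  assumes "simple_problem F X" and "f \<in> F"
  obtains p where "{x \<in> X. \<forall>y\<in>X. f x \<le> f y} = {p}"
proof -
  from assms have "pareto_set {f} X homeomorphic std_simplex {f}"
    unfolding simple_problem_def by blast
  then show thesis
    by (auto simp: std_simplex_singleton pareto_set_single_objective elim!: homeomorphic_singletonE intro: that)
qed

lemma box_point_differing_at:
  fixes p :: "'a^'n"
  assumes "\<forall>i. p $ i \<in> I i" and "a \<in> I j" "b \<in> I j" "a \<noteq> b"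
  obtains q where "\<forall>i. q $ i \<in> I i" "q $ j \<noteq> p $ j" "\<forall>i. i \<noteq> j \<longrightarrow> q $ i = p $ i"
proof
  define c where "c = (if p $ j = a then b else a)"
  let ?q = "\<chi> i. if i = j then c else p $ i"
  show "\<forall>i. ?q $ i \<in> I i" "?q $ j \<noteq> p $ j" "\<forall>i. i \<noteq> j \<longrightarrow> ?q $ i = p $ i"
    using assms by (auto simp: c_def)
qed

theorem theorem2:
  fixes K :: "'n::finite set" and i1 :: 'n and wide :: "'n \<Rightarrow> bool"
    and f :: "real \<Rightarrow> real" and g :: "real^'n \<Rightarrow> real" and h :: "real \<times> real \<Rightarrow> real"
  assumes "i1 \<in> K" and "K \<noteq> UNIV"
  shows "\<not> simple_problem
           {(\<lambda>x::real^'n. f (x $ i1)),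
            (\<lambda>x::real^'n. g (\<chi> i. if i \<in> K then 0 else x $ i) *
                 h (f (x $ i1), g (\<chi> i. if i \<in> K then 0 else x $ i)))}
           {x::real^'n. \<forall>i. x $ i \<in> (if i = i1 then {0..1}
                                     else if wide i then {-5..5} else {0..1})}"
    (is "\<not> simple_problem {?f1, ?f2} {x. \<forall>i. x $ i \<in> ?I i}")
proof
  let ?X = "{x. \<forall>i. x $ i \<in> ?I i}"
  assume "simple_problem {?f1, ?f2} ?X"
  then obtain p where minimisers: "{x \<in> ?X. \<forall>y\<in>?X. ?f1 x \<le> ?f1 y} = {p}"
    by (rule simple_problem_unique_minimiser[OF _ insertI1])
  obtain j where "j \<notin> K" using assms(2) by blast
  with assms(1) have "j \<noteq> i1" by blast
  have "p \<in> ?X" and p_min: "\<forall>y\<in>?X. ?f1 p \<le> ?f1 y" using minimisers by blast+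
  obtain q where "\<forall>i. q $ i \<in> ?I i" "q $ j \<noteq> p $ j" "\<forall>i. i \<noteq> j \<longrightarrow> q $ i = p $ i"
    by (rule box_point_differing_at[of p ?I 0 j 1]) (use \<open>p \<in> ?X\<close> in auto)
  with \<open>j \<noteq> i1\<close> have "q \<in> {x \<in> ?X. \<forall>y\<in>?X. ?f1 x \<le> ?f1 y}"
    using p_min by simp
  with minimisers \<open>q $ j \<noteq> p $ j\<close> show False by simp
qed

end
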